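(* Let $(c_t)_{t\ge0}$ be a solution to Smoluchowski's equation with multiplicative kernel (in the sense defined in the context) with initial condition $c_0$ satisfying $\langle c_0,m^2\rangle=\sum_{m\ge1}m^2c_0(m)<\infty$. Then $t\mapsto\langle c_t,m^2\rangle$ is bounded in a neighborhood of $0$, i.e. there is $\varepsilon>0$ with $\sup_{t\in[0,\varepsilon]}\sum_{m\ge1}m^2 c_t(m)<\infty$.
   Context: For $f,g:\mathbb{N}\to\mathbb{R}^+$ write $\langle f,g\rangle=\sum_{m\ge1}f(m)g(m)$, and write $m$, $m^2$ for the functions $m\mapsto m$, $m\mapsto m^2$. A family $(c_t(m),m\ge1)_{t\ge0}$ of nonnegative functions, each $t\mapsto c_t(m)$ continuous, is a solution to Smoluchowski's equation with initial condition $c_0\in[0,\infty)^{\mathbb{N}}$ if (i) for every $t\ge0$, $\int_0^t\langle m,c_s\rangle^2\,ds<\infty$, and (ii) for every $t\ge0$ and every $f:\mathbb{N}\to[0,\infty)$ with finite support, \[ \langle c_t,f\rangle-\langle c_0,f\rangle=\frac12\int_0^t\sum_{m,m'\ge1}mm'c_s(m)c_s(m')\big(f(m+m')-f(m)-f(m')\big)\,ds. \] *)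

theory Defs
  imports "HOL-Analysis.Analysis"
begin

definition pairing :: "(nat \<Rightarrow> real) \<Rightarrow> (nat \<Rightarrow> real) \<Rightarrow> ennreal" where
  "pairing f g = nn_integral (count_space {1..}) (\<lambda>m. ennreal (f m * g m))"

definition pairing_fin :: "(nat \<Rightarrow> real) \<Rightarrow> (nat \<Rightarrow> real) \<Rightarrow> real" where
  "pairing_fin c f = (\<Sum>m\<in>{m. 1 \<le> m \<and> f m \<noteq> 0}. c m * f m)"

definition coag :: "(nat \<Rightarrow> real) \<Rightarrow> (nat \<Rightarrow> real) \<Rightarrow> real" where
  "coag c f = infsum (\<lambda>(m, m'). real m * real m' * c m * c m' * (f (m + m') - f m - f m'))
                     ({1..} \<times> {1..})"

definition smol_solution :: "(real \<Rightarrow> nat \<Rightarrow> real) \<Rightarrow> bool" where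
  "smol_solution c \<longleftrightarrow>
     (\<forall>t\<ge>0. \<forall>m\<ge>1. c t m \<ge> 0) \<and>
     (\<forall>m\<ge>1. continuous_on {0..} (\<lambda>t. c t m)) \<and>
     (\<forall>t\<ge>0. (\<integral>\<^sup>+ s. indicator {0..t} s * (pairing (\<lambda>m. real m) (c s))\<^sup>2 \<partial>lborel) < \<infinity>) \<and>
     (\<forall>t\<ge>0. \<forall>f::nat \<Rightarrow> real. (\<forall>m. f m \<ge> 0) \<and> finite {m. f m \<noteq> 0} \<longrightarrow>
        pairing_fin (c t) f - pairing_fin (c 0) f
          = 1/2 * (LINT s:{0..t}|lborel. coag (c s) f))"

end

theory Submission imports Defs begin

text \<open>Test Smoluchowski's equation against the truncated second moment
  \<open>f\<^sub>n(m) = m\<^sup>2 [m < n]\<close>. Since \<open>(m+m')\<^sup>2 - m\<^sup>2 - m'\<^sup>2 = 2mm'\<close> below the truncation and the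
  increment is nonpositive above it, the truncated moment \<open>M\<^sub>n\<close> satisfies
  \<open>M\<^sub>n(t) \<le> M\<^sub>n(0) + \<integral>\<^sub>0\<^sup>t M\<^sub>n(s)\<^sup>2 ds\<close>. A comparison argument for this Riccati-type inequality
  bounds \<open>M\<^sub>n\<close> by \<open>K + 1\<close> on \<open>[0, 1/(2(K+1)\<^sup>2)]\<close>, where \<open>K = \<langle>c\<^sub>0, m\<^sup>2\<rangle>\<close>, uniformly in \<open>n\<close>;
  letting \<open>n \<rightarrow> \<infinity>\<close> bounds the second moment itself.\<close>

lemma continuous_on_first_crossing:
  fixes M :: "real \<Rightarrow> real"
  assumes cont: "continuous_on {a..b} M" and "a \<le> b" and "M a < B" and "B \<le> M b"
  obtains s where "a \<le> s" "s \<le> b" "M s = B" "\<And>y. y \<in> {a..s} \<Longrightarrow> M y \<le> B"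
proof -
  define T where "T = {a..b} \<inter> M -` {B..}"
  have "closed T"
    unfolding T_def by (rule continuous_closed_preimage[OF cont]) auto
  moreover have "b \<in> T" using assms by (auto simp: T_def)
  moreover have "bdd_below T" unfolding T_def by (rule bdd_belowI[of _ a]) auto
  ultimately have s_in: "Inf T \<in> T" and s_least: "\<And>x. x \<in> T \<Longrightarrow> Inf T \<le> x"
    using closed_contains_Inf cInf_lower by blast+
  define s where "s = Inf T"
  have s: "a \<le> s" "s \<le> b" "B \<le> M s" using s_in by (auto simp: s_def T_def)
  have "continuous_on {a..s} M" using cont by (rule continuous_on_subset) (use s in auto)
  then obtain x where x: "a \<le> x" "x \<le> s" "M x = B"
    using IVT'[of M a B s] s \<open>M a < B\<close> by force
  then have "x \<in> T" using s by (auto simp: T_def)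
  then have crossing: "M s = B" using x s_least[of x] by (simp add: s_def)
  have below: "M y \<le> B" if "y \<in> {a..s}" for y
  proof (cases "y = s")
    case False
    then have "y \<notin> T" using that s_least by (force simp: s_def)
    then show ?thesis using that s by (auto simp: T_def)
  qed (use crossing in simp)
  show thesis using s(1,2) crossing below by (rule that)
qed

lemma riccati_integral_inequality_bound:
  fixes M :: "real \<Rightarrow> real"
  assumes cont: "continuous_on {0..} M"
    and nonneg: "\<And>t. t \<ge> 0 \<Longrightarrow> M t \<ge> 0"
    and ineq: "\<And>t. t \<ge> 0 \<Longrightarrow> M t \<le> M 0 + (LINT s:{0..t}|lborel. (M s)\<^sup>2)"
    and "M 0 \<le> K" "K < B" "0 \<le> t" "t < (B - K) / B\<^sup>2"
  shows "M t \<le> B"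
proof (rule ccontr)
  assume "\<not> M t \<le> B"
  have "0 < B" using assms nonneg[of 0] by linarith
  have cont_t: "continuous_on {0..t} M" using cont by (rule continuous_on_subset) auto
  have "M 0 < B" "B \<le> M t" using assms \<open>\<not> M t \<le> B\<close> by linarith+
  then obtain s where s: "0 \<le> s" "s \<le> t" "M s = B"
    and below: "\<And>y. y \<in> {0..s} \<Longrightarrow> M y \<le> B"
    using continuous_on_first_crossing[OF cont_t \<open>0 \<le> t\<close>] by blast
  have cont_s: "continuous_on {0..s} M" using cont by (rule continuous_on_subset) auto
  have "(LINT y:{0..s}|lborel. (M y)\<^sup>2) \<le> (LINT y:{0..s}|lborel. B\<^sup>2)"
  proof (rule set_integral_mono)
    show "set_integrable lborel {0..s} (\<lambda>y. (M y)\<^sup>2)"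
      by (intro borel_integrable_atLeastAtMost' continuous_intros cont_s)
    show "set_integrable lborel {0..s} (\<lambda>y. B\<^sup>2)"
      by (intro borel_integrable_atLeastAtMost' continuous_intros)
  next
    fix y assume "y \<in> {0..s}"
    then show "(M y)\<^sup>2 \<le> B\<^sup>2" using below[of y] nonneg[of y] by (simp add: power_mono)
  qed
  also have "\<dots> = s * B\<^sup>2" using s by (simp add: set_integral_const)
  also have "\<dots> \<le> t * B\<^sup>2" using s by (intro mult_right_mono) auto
  also have "\<dots> < B - K" using assms \<open>0 < B\<close> by (simp add: pos_less_divide_eq)
  finally show False using ineq[of s] s assms by linarith
qed

definition sq_trunc :: "nat \<Rightarrow> nat \<Rightarrow> real" where
  "sq_trunc n m = (if m < n then (real m)\<^sup>2 else 0)"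

definition moment2_trunc :: "(nat \<Rightarrow> real) \<Rightarrow> nat \<Rightarrow> real" where
  "moment2_trunc d n = (\<Sum>m<n. d m * (real m)\<^sup>2)"

lemma pairing_fin_sq_trunc: "pairing_fin d (sq_trunc n) = moment2_trunc d n"
proof -
  have "{m. 1 \<le> m \<and> sq_trunc n m \<noteq> 0} = {1..<n}" by (auto simp: sq_trunc_def)
  moreover have "(\<Sum>m\<in>{1..<n}. d m * (real m)\<^sup>2) = (\<Sum>m<n. d m * (real m)\<^sup>2)"
    by (rule sum.mono_neutral_left) auto
  ultimately show ?thesis
    unfolding pairing_fin_def moment2_trunc_def by (simp add: sq_trunc_def)
qed

lemma sq_weight_nonneg: "(\<And>m. m \<ge> 1 \<Longrightarrow> d m \<ge> 0) \<Longrightarrow> d k * (real k)\<^sup>2 \<ge> 0"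
  by (cases "k = 0") auto

lemma moment2_trunc_nonneg: "(\<And>m. m \<ge> 1 \<Longrightarrow> d m \<ge> 0) \<Longrightarrow> moment2_trunc d n \<ge> 0"
  unfolding moment2_trunc_def by (intro sum_nonneg sq_weight_nonneg)

lemma pairing_sq_eq_SUP_moment2_trunc:
  assumes "\<And>m. m \<ge> 1 \<Longrightarrow> d m \<ge> 0"
  shows "pairing d (\<lambda>m. (real m)\<^sup>2) = (SUP n. ennreal (moment2_trunc d n))"
proof -
  have "(\<Sum>i<n. ennreal (d i * (real i)\<^sup>2) * indicator {1..} i) = ennreal (moment2_trunc d n)" for n
  proof -
    have "(\<Sum>i<n. ennreal (d i * (real i)\<^sup>2) * indicator {1..} i) = (\<Sum>i<n. ennreal (d i * (real i)\<^sup>2))"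
      by (intro sum.cong refl) (auto simp: indicator_def Suc_le_eq)
    also have "\<dots> = ennreal (moment2_trunc d n)"
      unfolding moment2_trunc_def by (subst sum_ennreal) (auto intro: sq_weight_nonneg assms)
    finally show ?thesis .
  qed
  then show ?thesis
    unfolding pairing_def
    by (simp add: nn_integral_count_space_indicator nn_integral_count_space_nat suminf_eq_SUP)
qed

lemma moment2_trunc_le_pairing:
  assumes "\<And>m. m \<ge> 1 \<Longrightarrow> d m \<ge> 0"
  shows "ennreal (moment2_trunc d n) \<le> pairing d (\<lambda>m. (real m)\<^sup>2)"
proof -
  have "ennreal (moment2_trunc d n) \<le> (SUP n. ennreal (moment2_trunc d n))"
    by (rule SUP_upper) simp
  then show ?thesis using pairing_sq_eq_SUP_moment2_trunc[OF assms] by simp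
qed

lemma coag_sq_trunc_le:
  assumes nonneg: "\<And>m. m \<ge> 1 \<Longrightarrow> d m \<ge> 0"
  shows "coag d (sq_trunc n) \<le> 2 * (moment2_trunc d n)\<^sup>2"
proof -
  define h where "h = (\<lambda>(m, m'). real m * real m' * d m * d m' *
                                  (sq_trunc n (m + m') - sq_trunc n m - sq_trunc n m'))"
  define g where "g = (\<lambda>(m::nat, m'::nat). 2 * (d m * (real m)\<^sup>2) * (d m' * (real m')\<^sup>2))"
  have h_le: "h (m, m') \<le> (if m + m' < n then g (m, m') else 0)" if "m \<ge> 1" "m' \<ge> 1" for m m'
  proof (cases "m + m' < n")
    case True
    then have "sq_trunc n (m + m') - sq_trunc n m - sq_trunc n m' = 2 * real m * real m'"
      by (auto simp: sq_trunc_def power2_eq_square algebra_simps)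
    with True show ?thesis by (simp add: h_def g_def power2_eq_square algebra_simps)
  next
    case False
    then have "sq_trunc n (m + m') - sq_trunc n m - sq_trunc n m' \<le> 0"
      by (auto simp: sq_trunc_def)
    moreover have "real m * real m' * d m * d m' \<ge> 0" using nonneg that by simp
    ultimately show ?thesis using False by (simp add: h_def mult_nonneg_nonpos)
  qed
  have g_nonneg: "g x \<ge> 0" for x
  proof -
    obtain m m' where "x = (m, m')" by (cases x)
    moreover have "\<And>k. d k * (real k)\<^sup>2 \<ge> 0" using nonneg by (rule sq_weight_nonneg)
    ultimately show ?thesis by (simp add: g_def)
  qed
  show ?thesis
  proof (cases "h summable_on {1..} \<times> {1..}")
    case False
    then show ?thesis
      unfolding coag_def h_def[symmetric] by (simp add: infsum_not_exists)
  next
    case True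
    have "coag d (sq_trunc n) \<le> infsum g ({..<n} \<times> {..<n})"
      unfolding coag_def h_def[symmetric]
    proof (rule infsum_mono_neutral[OF True])
      fix x assume x: "x \<in> {1..} \<times> {1..} \<inter> {..<n} \<times> {..<n}"
      obtain m m' where [simp]: "x = (m, m')" by (cases x)
      show "h x \<le> g x" using g_nonneg[of x] x h_le[of m m'] by (auto split: if_splits)
    next
      fix x assume x: "x \<in> {1..} \<times> {1..} - {..<n} \<times> {..<n}"
      obtain m m' where [simp]: "x = (m, m')" by (cases x)
      show "h x \<le> 0" using x h_le[of m m'] by auto
    next
      fix x show "0 \<le> g x" by (rule g_nonneg)
    qed simp
    also have "\<dots> = (\<Sum>m<n. \<Sum>m'<n. 2 * (d m * (real m)\<^sup>2) * (d m' * (real m')\<^sup>2))"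
      by (simp add: g_def sum.cartesian_product)
    also have "\<dots> = 2 * ((\<Sum>m<n. d m * (real m)\<^sup>2) * (\<Sum>m'<n. d m' * (real m')\<^sup>2))"
      by (subst sum_product) (simp only: sum_distrib_left mult.assoc)
    also have "\<dots> = 2 * (moment2_trunc d n)\<^sup>2"
      by (simp add: moment2_trunc_def power2_eq_square)
    finally show ?thesis .
  qed
qed

lemma smol_solution_continuous_on_moment2_trunc:
  assumes "smol_solution c"
  shows "continuous_on {0..} (\<lambda>t. moment2_trunc (c t) n)"
proof -
  have "continuous_on {0..} (\<lambda>t. c t m * (real m)\<^sup>2)" for m
  proof (cases "m = 0")
    case False
    then have "continuous_on {0..} (\<lambda>t. c t m)" using assms by (simp add: smol_solution_def)
    then show ?thesis by (rule continuous_on_mult_right)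
  qed simp
  then show ?thesis unfolding moment2_trunc_def by (intro continuous_on_sum)
qed

lemma smol_solution_moment2_trunc_le:
  assumes sol: "smol_solution c" and t: "t \<ge> 0"
  shows "moment2_trunc (c t) n \<le> moment2_trunc (c 0) n + (LINT s:{0..t}|lborel. (moment2_trunc (c s) n)\<^sup>2)"
proof -
  have nonneg: "\<And>s m. s \<ge> 0 \<Longrightarrow> m \<ge> 1 \<Longrightarrow> c s m \<ge> 0"
    using sol by (simp add: smol_solution_def)
  have "finite {m. sq_trunc n m \<noteq> 0}"
    by (rule finite_subset[of _ "{..<n}"]) (auto simp: sq_trunc_def)
  then have weak_form: "moment2_trunc (c t) n - moment2_trunc (c 0) n
                          = 1/2 * (LINT s:{0..t}|lborel. coag (c s) (sq_trunc n))"
    using sol t by (simp add: smol_solution_def sq_trunc_def[abs_def] pairing_fin_sq_trunc[symmetric])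
  have "continuous_on {0..t} (\<lambda>s. moment2_trunc (c s) n)"
    by (rule continuous_on_subset[OF smol_solution_continuous_on_moment2_trunc[OF sol]]) auto
  then have "continuous_on {0..t} (\<lambda>s. 2 * (moment2_trunc (c s) n)\<^sup>2)"
    by (intro continuous_intros)
  then have integrable: "set_integrable lborel {0..t} (\<lambda>s. 2 * (moment2_trunc (c s) n)\<^sup>2)"
    by (rule borel_integrable_atLeastAtMost')
  have "(LINT s:{0..t}|lborel. coag (c s) (sq_trunc n)) \<le> (LINT s:{0..t}|lborel. 2 * (moment2_trunc (c s) n)\<^sup>2)"
  proof (cases "set_integrable lborel {0..t} (\<lambda>s. coag (c s) (sq_trunc n))")
    case True
    show ?thesis
      by (rule set_integral_mono[OF True integrable]) (auto intro!: coag_sq_trunc_le nonneg)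
  next
    case False
    \<comment> \<open>the Bochner integral of a non-integrable function is the junk value 0\<close>
    then have "(LINT s:{0..t}|lborel. coag (c s) (sq_trunc n)) = 0"
      by (simp add: set_lebesgue_integral_def set_integrable_def not_integrable_integral_eq)
    moreover have "(LINT s:{0..t}|lborel. 2 * (moment2_trunc (c s) n)\<^sup>2) \<ge> 0"
      unfolding set_lebesgue_integral_def
      by (rule Bochner_Integration.integral_nonneg) (auto simp: indicator_def)
    ultimately show ?thesis by simp
  qed
  also have "\<dots> = 2 * (LINT s:{0..t}|lborel. (moment2_trunc (c s) n)\<^sup>2)" by simp
  finally show ?thesis using weak_form by linarith
qed

lemma smol_solution_moment2_trunc_bound:
  assumes sol: "smol_solution c" and initial: "\<And>n. moment2_trunc (c 0) n \<le> K"
    and "K \<ge> 0" "0 \<le> t" "t < 1 / (K + 1)\<^sup>2"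
  shows "moment2_trunc (c t) n \<le> K + 1"
proof (rule riccati_integral_inequality_bound[where M = "\<lambda>t. moment2_trunc (c t) n" and K = K])
  show "continuous_on {0..} (\<lambda>t. moment2_trunc (c t) n)"
    by (rule smol_solution_continuous_on_moment2_trunc[OF sol])
  show "moment2_trunc (c s) n \<ge> 0" if "s \<ge> 0" for s
    using sol that by (intro moment2_trunc_nonneg) (simp add: smol_solution_def)
qed (use assms smol_solution_moment2_trunc_le[OF sol] in auto)

theorem lemma2p3:
  fixes c :: "real \<Rightarrow> nat \<Rightarrow> real"
  assumes "smol_solution c"
    and "pairing (c 0) (\<lambda>m. (real m)\<^sup>2) < \<infinity>"
  shows "\<exists>\<epsilon>>0. (SUP t\<in>{0..\<epsilon>}. pairing (c t) (\<lambda>m. (real m)\<^sup>2)) < \<infinity>"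
proof -
  have nonneg: "\<And>m. m \<ge> 1 \<Longrightarrow> c t m \<ge> 0" if "t \<ge> 0" for t
    using assms(1) that by (simp add: smol_solution_def)
  define K where "K = enn2real (pairing (c 0) (\<lambda>m. (real m)\<^sup>2))"
  have "K \<ge> 0" by (simp add: K_def)
  have "ennreal (moment2_trunc (c 0) n) \<le> ennreal K" for n
    using moment2_trunc_le_pairing[OF nonneg[OF order_refl]] assms(2)
    by (simp add: K_def less_top[symmetric])
  then have initial: "moment2_trunc (c 0) n \<le> K" for n
    using \<open>K \<ge> 0\<close> by simp
  define \<epsilon> where "\<epsilon> = 1 / (2 * (K + 1)\<^sup>2)"
  have "(K + 1)\<^sup>2 > 0" using \<open>K \<ge> 0\<close> by simp
  then have "\<epsilon> > 0" "\<epsilon> < 1 / (K + 1)\<^sup>2" by (simp_all add: \<epsilon>_def field_simps)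
  then have "pairing (c t) (\<lambda>m. (real m)\<^sup>2) \<le> ennreal (K + 1)" if "t \<in> {0..\<epsilon>}" for t
    using that nonneg smol_solution_moment2_trunc_bound[OF assms(1) initial \<open>K \<ge> 0\<close>]
    by (simp add: pairing_sq_eq_SUP_moment2_trunc SUP_least ennreal_leI)
  then have "(SUP t\<in>{0..\<epsilon>}. pairing (c t) (\<lambda>m. (real m)\<^sup>2)) \<le> ennreal (K + 1)"
    by (rule SUP_least)
  also have "\<dots> < \<infinity>" by simp
  finally show ?thesis using \<open>\<epsilon> > 0\<close> by blast
qed

end
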